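(* For $\varepsilon>0$ let $\alpha(\varepsilon)=\inf_{0<x<\min\{\varepsilon,1\}}(x-x^3)^{-2/3}$, which equals $(\varepsilon-\varepsilon^3)^{-2/3}$ if $\varepsilon\le3^{-1/2}$ and $3\cdot2^{-2/3}=1.8898\ldots$ otherwise. Then for every $\varepsilon>0$, $$\max_{1\le k\le n}\sigma_k^2\le\alpha(\varepsilon)\sup_{0<x\le\varepsilon}\big(xL_n(x)\big)^{2/3}.$$
   Context: $X_1,\dots,X_n$ are independent real random variables with $\mathbb E X_k=0$, $\sigma_k^2=\mathbb E X_k^2<\infty$, normalized so that $\sum_{k=1}^n\sigma_k^2=1$; $L_n(z)=\sum_{k=1}^n\mathbb E X_k^2\mathbf 1(|X_k|\ge z)$ for $z\ge0$. *)

theory Defs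
  imports "HOL-Probability.Probability"
begin

definition lind_L :: "'a measure \<Rightarrow> (nat \<Rightarrow> 'a \<Rightarrow> real) \<Rightarrow> nat \<Rightarrow> real \<Rightarrow> real" where
  "lind_L M X n z = (\<Sum>k=1..n. integral\<^sup>L M (\<lambda>\<omega>. (X k \<omega>)\<^sup>2 * indicator {\<omega>. \<bar>X k \<omega>\<bar> \<ge> z} \<omega>))"

definition alpha_eps :: "real \<Rightarrow> real" where
  "alpha_eps \<epsilon> = (INF x\<in>{0<..<min \<epsilon> 1}. (x - x ^ 3) powr (-(2/3)))"

end

theory Submission
  imports Defs
begin

text \<open>Fix k with maximal variance s = sigma^2, take 0 < x < min eps 1 and put y = x sigma,
  so that 0 < y <= eps. Truncating X_k at level y loses at most y^2 of its second moment, hence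
  y L_n(y) >= y (sigma^2 - y^2) = sigma^3 (x - x^3). Raising this to the power 2/3 gives
  sigma^2 <= (x - x^3)^(-2/3) sup (y L_n(y))^(2/3), and the infimum over x is alpha(eps).\<close>

lemma powr_two_thirds_cube_sqrt:
  fixes s a :: real
  assumes "0 \<le> s" and "0 \<le> a"
  shows "(sqrt s ^ 3 * a) powr (2/3) = s * a powr (2/3)"
proof (cases "s = 0")
  case False
  then have "0 < sqrt s" using assms(1) by simp
  then have "(sqrt s ^ 3) powr (2/3) = (sqrt s powr 3) powr (2/3)"
    using powr_realpow[of "sqrt s" 3] by simp
  also have "\<dots> = sqrt s powr 2" by (simp add: powr_powr)
  also have "\<dots> = s" using \<open>0 < sqrt s\<close> assms(1) by (simp add: powr_realpow)
  finally show ?thesis using assms by (simp add: powr_mult)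
qed simp

lemma le_INF_mult:
  fixes f :: "'b \<Rightarrow> real"
  assumes "A \<noteq> {}" and "0 \<le> c" and "\<And>x. x \<in> A \<Longrightarrow> s \<le> f x * c"
  shows "s \<le> (INF x\<in>A. f x) * c"
proof (cases "c = 0")
  case True
  then show ?thesis using assms(1,3) by auto
next
  case False
  then have "c > 0" using assms(2) by simp
  then have "s / c \<le> (INF x\<in>A. f x)"
    using assms(3) by (intro cINF_greatest[OF assms(1)]) (simp add: divide_le_eq)
  then show ?thesis using \<open>c > 0\<close> by (simp add: divide_le_eq)
qed

lemma x_minus_cube_pos:
  fixes x :: real
  assumes "0 < x" and "x < 1"
  shows "0 < x - x ^ 3"
proof -
  have "x ^ 3 < x ^ 1" using assms by (intro power_strict_decreasing) auto
  then show ?thesis by simp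
qed

lemma bdd_above_powr_mult_bounded:
  fixes g :: "real \<Rightarrow> real"
  assumes "\<And>z. 0 \<le> g z" and "\<And>z. g z \<le> 1" and "0 \<le> p"
  shows "bdd_above ((\<lambda>x. (x * g x) powr p) ` {0<..\<epsilon>})"
proof (rule bdd_aboveI2)
  fix x assume x: "x \<in> {0<..\<epsilon>}"
  have "x * g x \<le> \<epsilon> * 1"
    using x assms(1,2)[of x] by (intro mult_mono) auto
  then show "(x * g x) powr p \<le> \<epsilon> powr p"
    using x assms(1)[of x] assms(3) by (intro powr_mono2) auto
qed

definition tail_moment :: "'a measure \<Rightarrow> ('a \<Rightarrow> real) \<Rightarrow> real \<Rightarrow> real" where
  "tail_moment M Y z = integral\<^sup>L M (\<lambda>\<omega>. (Y \<omega>)\<^sup>2 * indicator {\<omega>. \<bar>Y \<omega>\<bar> \<ge> z} \<omega>)"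

lemma lind_L_eq_sum_tail_moment: "lind_L M X n z = (\<Sum>k=1..n. tail_moment M (X k) z)"
  unfolding lind_L_def tail_moment_def ..

lemma tail_moment_nonneg: "0 \<le> tail_moment M Y z"
  unfolding tail_moment_def by (rule Bochner_Integration.integral_nonneg) (auto simp: indicator_def)

lemma integrable_tail_moment:
  fixes Y :: "'a \<Rightarrow> real"
  assumes "Y \<in> borel_measurable M" and "integrable M (\<lambda>\<omega>. (Y \<omega>)\<^sup>2)"
  shows "integrable M (\<lambda>\<omega>. (Y \<omega>)\<^sup>2 * indicator {\<omega>. \<bar>Y \<omega>\<bar> \<ge> z} \<omega>)"
proof -
  have "(\<lambda>\<omega>. (Y \<omega>)\<^sup>2 * indicator {\<omega>. \<bar>Y \<omega>\<bar> \<ge> z} \<omega>) = (\<lambda>\<omega>. if z \<le> \<bar>Y \<omega>\<bar> then (Y \<omega>)\<^sup>2 else 0)"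
    by (simp add: fun_eq_iff)
  then have "(\<lambda>\<omega>. (Y \<omega>)\<^sup>2 * indicator {\<omega>. \<bar>Y \<omega>\<bar> \<ge> z} \<omega>) \<in> borel_measurable M"
    using assms(1) by simp
  then show ?thesis
    by (rule Bochner_Integration.integrable_bound[OF assms(2)]) (auto simp: indicator_def)
qed

lemma tail_moment_le_second_moment:
  assumes "Y \<in> borel_measurable M" and "integrable M (\<lambda>\<omega>. (Y \<omega>)\<^sup>2)"
  shows "tail_moment M Y z \<le> integral\<^sup>L M (\<lambda>\<omega>. (Y \<omega>)\<^sup>2)"
  unfolding tail_moment_def
  by (rule integral_mono[OF integrable_tail_moment[OF assms] assms(2)]) (auto simp: indicator_def)

lemma (in prob_space) second_moment_le_tail_moment_plus_square:
  assumes "Y \<in> borel_measurable M" and "integrable M (\<lambda>\<omega>. (Y \<omega>)\<^sup>2)"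
  shows "integral\<^sup>L M (\<lambda>\<omega>. (Y \<omega>)\<^sup>2) \<le> tail_moment M Y z + z\<^sup>2"
proof -
  have "integral\<^sup>L M (\<lambda>\<omega>. (Y \<omega>)\<^sup>2)
        \<le> integral\<^sup>L M (\<lambda>\<omega>. (Y \<omega>)\<^sup>2 * indicator {\<omega>. \<bar>Y \<omega>\<bar> \<ge> z} \<omega> + z\<^sup>2)"
  proof (rule integral_mono[OF assms(2)])
    show "integrable M (\<lambda>\<omega>. (Y \<omega>)\<^sup>2 * indicator {\<omega>. \<bar>Y \<omega>\<bar> \<ge> z} \<omega> + z\<^sup>2)"
      using integrable_tail_moment[OF assms] by simp
    fix \<omega>
    have "\<bar>Y \<omega>\<bar> < z \<Longrightarrow> \<bar>Y \<omega>\<bar>\<^sup>2 \<le> z\<^sup>2" by (intro power_mono) auto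
    then show "(Y \<omega>)\<^sup>2 \<le> (Y \<omega>)\<^sup>2 * indicator {\<omega>. \<bar>Y \<omega>\<bar> \<ge> z} \<omega> + z\<^sup>2"
      by (cases "z \<le> \<bar>Y \<omega>\<bar>") (auto simp: indicator_def)
  qed
  also have "\<dots> = tail_moment M Y z + z\<^sup>2"
    unfolding tail_moment_def using integrable_tail_moment[OF assms] by (simp add: prob_space)
  finally show ?thesis .
qed

lemma (in prob_space) cube_le_tail_moment:
  assumes "Y \<in> borel_measurable M" and "integrable M (\<lambda>\<omega>. (Y \<omega>)\<^sup>2)" and "0 \<le> x"
  defines "\<sigma> \<equiv> sqrt (integral\<^sup>L M (\<lambda>\<omega>. (Y \<omega>)\<^sup>2))"
  shows "\<sigma> ^ 3 * (x - x ^ 3) \<le> x * \<sigma> * tail_moment M Y (x * \<sigma>)"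
proof -
  have "\<sigma>\<^sup>2 = integral\<^sup>L M (\<lambda>\<omega>. (Y \<omega>)\<^sup>2)"
    unfolding \<sigma>_def by (simp add: integral_nonneg)
  then have "\<sigma>\<^sup>2 - (x * \<sigma>)\<^sup>2 \<le> tail_moment M Y (x * \<sigma>)"
    using second_moment_le_tail_moment_plus_square[OF assms(1,2), of "x * \<sigma>"] by linarith
  moreover have "0 \<le> x * \<sigma>" using assms(3) unfolding \<sigma>_def by simp
  ultimately have "x * \<sigma> * (\<sigma>\<^sup>2 - (x * \<sigma>)\<^sup>2) \<le> x * \<sigma> * tail_moment M Y (x * \<sigma>)"
    by (rule mult_left_mono)
  then show ?thesis by (simp add: algebra_simps power2_eq_square power3_eq_cube)
qed

lemma tail_moment_le_lind_L:
  assumes "k \<in> {1..n}"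
  shows "tail_moment M (X k) z \<le> lind_L M X n z"
  unfolding lind_L_eq_sum_tail_moment
  by (rule member_le_sum[OF assms]) (simp_all add: tail_moment_nonneg)

lemma lind_L_nonneg: "0 \<le> lind_L M X n z"
  unfolding lind_L_eq_sum_tail_moment by (simp add: sum_nonneg tail_moment_nonneg)

lemma lind_L_le_sum_second_moments:
  assumes "\<And>k. k \<in> {1..n} \<Longrightarrow> X k \<in> borel_measurable M"
    and "\<And>k. k \<in> {1..n} \<Longrightarrow> integrable M (\<lambda>\<omega>. (X k \<omega>)\<^sup>2)"
  shows "lind_L M X n z \<le> (\<Sum>k=1..n. integral\<^sup>L M (\<lambda>\<omega>. (X k \<omega>)\<^sup>2))"
  unfolding lind_L_eq_sum_tail_moment
  by (rule sum_mono) (simp add: assms tail_moment_le_second_moment)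

lemma (in prob_space) second_moment_le_of_tail_bound:
  assumes "Y \<in> borel_measurable M" and "integrable M (\<lambda>\<omega>. (Y \<omega>)\<^sup>2)"
    and "integral\<^sup>L M (\<lambda>\<omega>. (Y \<omega>)\<^sup>2) \<le> 1"
    and "\<And>z. tail_moment M Y z \<le> g z"
    and "\<And>y. y \<in> {0<..\<epsilon>} \<Longrightarrow> (y * g y) powr (2/3) \<le> c" and "0 \<le> c"
    and "0 < x" and "x < 1" and "x < \<epsilon>"
  shows "integral\<^sup>L M (\<lambda>\<omega>. (Y \<omega>)\<^sup>2) \<le> (x - x ^ 3) powr (-(2/3)) * c"
proof -
  define s where "s = integral\<^sup>L M (\<lambda>\<omega>. (Y \<omega>)\<^sup>2)"
  define y where "y = x * sqrt s"
  have "0 \<le> s" unfolding s_def by (simp add: integral_nonneg)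
  have x3: "0 < x - x ^ 3" using assms(7,8) by (rule x_minus_cube_pos)
  have "s * (x - x ^ 3) powr (2/3) \<le> c"
  proof (cases "s = 0")
    case False
    have "sqrt s \<le> 1" using assms(3) unfolding s_def by simp
    then have "y \<le> x"
      using assms(7) mult_left_le[of "sqrt s" x] unfolding y_def by simp
    moreover have "0 < y" using False \<open>0 \<le> s\<close> assms(7) unfolding y_def by simp
    ultimately have y: "y \<in> {0<..\<epsilon>}" using assms(9) by simp
    have "sqrt s ^ 3 * (x - x ^ 3) \<le> y * tail_moment M Y y"
      using cube_le_tail_moment[OF assms(1,2)] assms(7) unfolding y_def s_def by simp
    also have "\<dots> \<le> y * g y"
      using \<open>0 < y\<close> assms(4) by (intro mult_left_mono) auto
    finally have "(sqrt s ^ 3 * (x - x ^ 3)) powr (2/3) \<le> (y * g y) powr (2/3)"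
      using \<open>0 \<le> s\<close> x3 by (intro powr_mono2) auto
    also have "\<dots> \<le> c" using assms(5)[OF y] .
    finally show ?thesis
      using powr_two_thirds_cube_sqrt[OF \<open>0 \<le> s\<close>, of "x - x ^ 3"] x3 by simp
  qed (use assms(6) in simp)
  then have "s \<le> c / (x - x ^ 3) powr (2/3)"
    using x3 by (simp add: pos_le_divide_eq)
  then show ?thesis
    unfolding s_def powr_minus_divide by simp
qed

theorem lemma4:
  fixes M :: "'a measure" and X :: "nat \<Rightarrow> 'a \<Rightarrow> real" and n :: nat and \<epsilon> :: real
  assumes "prob_space M"
    and "\<And>k. k \<in> {1..n} \<Longrightarrow> X k \<in> borel_measurable M"
    and "prob_space.indep_vars M (\<lambda>_. borel) X {1..n}"
    and "\<And>k. k \<in> {1..n} \<Longrightarrow> integrable M (X k)"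
    and "\<And>k. k \<in> {1..n} \<Longrightarrow> integral\<^sup>L M (X k) = 0"
    and "\<And>k. k \<in> {1..n} \<Longrightarrow> integrable M (\<lambda>\<omega>. (X k \<omega>)\<^sup>2)"
    and "(\<Sum>k=1..n. integral\<^sup>L M (\<lambda>\<omega>. (X k \<omega>)\<^sup>2)) = 1"
    and "\<epsilon> > 0"
  shows "Max ((\<lambda>k. integral\<^sup>L M (\<lambda>\<omega>. (X k \<omega>)\<^sup>2)) ` {1..n})
           \<le> alpha_eps \<epsilon> * (SUP x\<in>{0<..\<epsilon>}. (x * lind_L M X n x) powr (2/3))"
proof -
  interpret prob_space M by (rule assms(1))
  define c where "c = (SUP x\<in>{0<..\<epsilon>}. (x * lind_L M X n x) powr (2/3))"
  have L_le_1: "lind_L M X n z \<le> 1" for z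
    using lind_L_le_sum_second_moments[of n X M z] assms(2,6,7) by simp
  have c_upper: "(y * lind_L M X n y) powr (2/3) \<le> c" if "y \<in> {0<..\<epsilon>}" for y
    unfolding c_def using that lind_L_nonneg L_le_1
    by (intro cSUP_upper bdd_above_powr_mult_bounded) auto
  have "0 \<le> c"
    using c_upper[of \<epsilon>] assms(8) by (meson greaterThanAtMost_iff order.refl order_trans powr_ge_zero)
  have "{1..n} \<noteq> {}" using assms(7) by (cases n) auto
  then have "Max ((\<lambda>k. integral\<^sup>L M (\<lambda>\<omega>. (X k \<omega>)\<^sup>2)) ` {1..n})
      \<in> (\<lambda>k. integral\<^sup>L M (\<lambda>\<omega>. (X k \<omega>)\<^sup>2)) ` {1..n}"
    by (intro Max_in) auto
  then obtain k where k: "k \<in> {1..n}"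
    and max_eq: "Max ((\<lambda>k. integral\<^sup>L M (\<lambda>\<omega>. (X k \<omega>)\<^sup>2)) ` {1..n}) = integral\<^sup>L M (\<lambda>\<omega>. (X k \<omega>)\<^sup>2)"
    by blast
  have "integral\<^sup>L M (\<lambda>\<omega>. (X k \<omega>)\<^sup>2) \<le> 1"
    using member_le_sum[OF k, of "\<lambda>k. integral\<^sup>L M (\<lambda>\<omega>. (X k \<omega>)\<^sup>2)"] assms(7)
    by (simp add: integral_nonneg)
  then have bound: "integral\<^sup>L M (\<lambda>\<omega>. (X k \<omega>)\<^sup>2) \<le> (x - x ^ 3) powr (-(2/3)) * c"
    if "x \<in> {0<..<min \<epsilon> 1}" for x
    using that c_upper \<open>0 \<le> c\<close> tail_moment_le_lind_L[OF k]
    by (intro second_moment_le_of_tail_bound[where g = "lind_L M X n"] assms(2,6)[OF k]) auto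
  have "{0<..<min \<epsilon> 1} \<noteq> {}" using assms(8) by simp
  from le_INF_mult[OF this \<open>0 \<le> c\<close> bound] show ?thesis
    unfolding max_eq alpha_eps_def c_def .
qed

end
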